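(* Let $S$ be a Stone relation algebra and $x,y,z\in S$. Then: 1. $x$ is an ideal if and only if $\top x\top=x$. 2. If $x$ and $z$ are vectors, then $x^{\smile}yz$ is an ideal. 3. The set $\mathrm{I}(S)$ of ideals is closed under $\cdot$, $\sqcup$, $\sqcap$, converse and pseudocomplement. 4. $\bot$ and $\top$ are ideals. 5. If $x$ and $y$ are ideals, then $xy=x\sqcap y$. 6. $\mathrm{I}(S)$, with $\sqcup,\sqcap$, pseudocomplement, converse, $\bot,\top$ restricted from $S$, with $\sqcap$ as composition and $\top$ as identity, is a Stone relation algebra. 7. If $x$ is an ideal, then $x=x^{\smile}$. 8. If $x$ is an ideal, then $yz\sqcap x=(y\sqcap x)(z\sqcap x)$.
   Context: A Stone relation algebra is a structure $(S,\sqcup,\sqcap,\cdot,\overline{\,\cdot\,},{}^{\smile},\bot,\top,1)$ (write $xy$ for $x\cdot y$, $\overline{x}$ for the pseudocomplement, $x^{\smile}$ for the converse) such that: $(S,\sqcup,\sqcap,\bot,\top)$ is a bounded distributive lattice with order $x\sqsubseteq y\iff x\sqcup y=y$; $x\sqcap y=\bot\iff x\sqsubseteq\overline{y}$; $\overline{x}\sqcup\overline{\overline{x}}=\top$; $\cdot$ is associative with two-sided unit $1$, distributes over $\sqcup$ on both sides, and $\bot$ is a zero of $\cdot$; $x^{\smile\smile}=x$, $(xy)^{\smile}=y^{\smile}x^{\smile}$, $(x\sqcup y)^{\smile}=x^{\smile}\sqcup y^{\smile}$; $\overline{\overline{1}}=1$; $\overline{\overline{xy}}=\overline{\overline{x}}\,\overline{\overline{y}}$;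 $xy\sqcap z\sqsubseteq x(y\sqcap x^{\smile}z)$. $x$ is a vector if $x\top=x$, a covector if $\top x=x$, and an ideal if it is both a vector and a covector. *)

theory Defs
  imports Main
begin

text \<open>The order is  x \<sqsubseteq> y  iff  join x y = y.\<close>

definition stone_ra ::
  "'a set \<Rightarrow> ('a \<Rightarrow> 'a \<Rightarrow> 'a) \<Rightarrow> ('a \<Rightarrow> 'a \<Rightarrow> 'a) \<Rightarrow> ('a \<Rightarrow> 'a \<Rightarrow> 'a)
    \<Rightarrow> ('a \<Rightarrow> 'a) \<Rightarrow> ('a \<Rightarrow> 'a) \<Rightarrow> 'a \<Rightarrow> 'a \<Rightarrow> 'a \<Rightarrow> bool" where
  "stone_ra S join meet mult pc cv bt tp one \<longleftrightarrow>
     \<comment> \<open>closure of the carrier\<close>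
     bt \<in> S \<and> tp \<in> S \<and> one \<in> S \<and>
     (\<forall>x\<in>S. \<forall>y\<in>S. join x y \<in> S \<and> meet x y \<in> S \<and> mult x y \<in> S) \<and>
     (\<forall>x\<in>S. pc x \<in> S \<and> cv x \<in> S) \<and>
     \<comment> \<open>bounded distributive lattice\<close>
     (\<forall>x\<in>S. \<forall>y\<in>S. \<forall>z\<in>S.
        join (join x y) z = join x (join y z) \<and> meet (meet x y) z = meet x (meet y z) \<and>
        meet x (join y z) = join (meet x y) (meet x z)) \<and>
     (\<forall>x\<in>S. \<forall>y\<in>S. join x y = join y x \<and> meet x y = meet y x \<and>
        join x (meet x y) = x \<and> meet x (join x y) = x) \<and>
     (\<forall>x\<in>S. join x bt = x \<and> meet x tp = x) \<and>
     \<comment> \<open>pseudocomplement and Stone axiom\<close>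
     (\<forall>x\<in>S. \<forall>y\<in>S. meet x y = bt \<longleftrightarrow> join x (pc y) = pc y) \<and>
     (\<forall>x\<in>S. join (pc x) (pc (pc x)) = tp) \<and>
     \<comment> \<open>composition\<close>
     (\<forall>x\<in>S. \<forall>y\<in>S. \<forall>z\<in>S. mult (mult x y) z = mult x (mult y z) \<and>
        mult x (join y z) = join (mult x y) (mult x z) \<and>
        mult (join x y) z = join (mult x z) (mult y z)) \<and>
     (\<forall>x\<in>S. mult one x = x \<and> mult x one = x \<and> mult bt x = bt \<and> mult x bt = bt) \<and>
     \<comment> \<open>converse\<close>
     (\<forall>x\<in>S. cv (cv x) = x) \<and>
     (\<forall>x\<in>S. \<forall>y\<in>S. cv (mult x y) = mult (cv y) (cv x) \<and> cv (join x y) = join (cv x) (cv y)) \<and>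
     \<comment> \<open>remaining axioms\<close>
     pc (pc one) = one \<and>
     (\<forall>x\<in>S. \<forall>y\<in>S. pc (pc (mult x y)) = mult (pc (pc x)) (pc (pc y))) \<and>
     (\<forall>x\<in>S. \<forall>y\<in>S. \<forall>z\<in>S.
        join (meet (mult x y) z) (mult x (meet y (mult (cv x) z)))
          = mult x (meet y (mult (cv x) z)))"

definition is_vector :: "('a \<Rightarrow> 'a \<Rightarrow> 'a) \<Rightarrow> 'a \<Rightarrow> 'a \<Rightarrow> bool" where
  "is_vector mult tp x \<longleftrightarrow> mult x tp = x"

definition is_covector :: "('a \<Rightarrow> 'a \<Rightarrow> 'a) \<Rightarrow> 'a \<Rightarrow> 'a \<Rightarrow> bool" where
  "is_covector mult tp x \<longleftrightarrow> mult tp x = x"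

definition is_ideal :: "('a \<Rightarrow> 'a \<Rightarrow> 'a) \<Rightarrow> 'a \<Rightarrow> 'a \<Rightarrow> bool" where
  "is_ideal mult tp x \<longleftrightarrow> is_vector mult tp x \<and> is_covector mult tp x"

definition ideals :: "'a set \<Rightarrow> ('a \<Rightarrow> 'a \<Rightarrow> 'a) \<Rightarrow> 'a \<Rightarrow> 'a set" where
  "ideals S mult tp = {x \<in> S. is_ideal mult tp x}"

end

theory Submission
  imports Defs
begin

(* An ideal x satisfies x = \<top>x\<top>, so xy \<sqsubseteq> x\<top> \<sqinter> \<top>y = x \<sqinter> y, while the Dedekind law gives
   x \<sqinter> y \<sqsubseteq> x(1 \<sqinter> x\<^sup>\<smile>y) \<sqsubseteq> x\<top>y = xy: on ideals, composition is meet.  The same law yields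
   x \<sqsubseteq> xx\<^sup>\<smile>x \<sqsubseteq> \<top>x\<^sup>\<smile>\<top> = x\<^sup>\<smile>, so ideals are symmetric.  The ideals are closed under all operations
   (pseudocomplements of vectors are vectors, again by the Dedekind law), and with composition
   collapsed to meet, converse to the identity and the unit to \<top>, the Stone relation algebra
   axioms reduce to lattice facts inherited from S. *)

locale stone_relation_algebra =
  fixes S :: "'a set"
    and join meet mult :: "'a \<Rightarrow> 'a \<Rightarrow> 'a"
    and pc cv :: "'a \<Rightarrow> 'a"
    and bt tp one :: 'a
  assumes bot_closed [simp]: "bt \<in> S"
    and top_closed [simp]: "tp \<in> S"
    and one_closed [simp]: "one \<in> S"
    and join_closed [simp]: "x \<in> S \<Longrightarrow> y \<in> S \<Longrightarrow> join x y \<in> S"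
    and meet_closed [simp]: "x \<in> S \<Longrightarrow> y \<in> S \<Longrightarrow> meet x y \<in> S"
    and mult_closed [simp]: "x \<in> S \<Longrightarrow> y \<in> S \<Longrightarrow> mult x y \<in> S"
    and pc_closed [simp]: "x \<in> S \<Longrightarrow> pc x \<in> S"
    and cv_closed [simp]: "x \<in> S \<Longrightarrow> cv x \<in> S"
    and join_assoc: "x \<in> S \<Longrightarrow> y \<in> S \<Longrightarrow> z \<in> S \<Longrightarrow> join (join x y) z = join x (join y z)"
    and meet_assoc: "x \<in> S \<Longrightarrow> y \<in> S \<Longrightarrow> z \<in> S \<Longrightarrow> meet (meet x y) z = meet x (meet y z)"
    and meet_join_distrib:
      "x \<in> S \<Longrightarrow> y \<in> S \<Longrightarrow> z \<in> S \<Longrightarrow> meet x (join y z) = join (meet x y) (meet x z)"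
    and join_commute: "x \<in> S \<Longrightarrow> y \<in> S \<Longrightarrow> join x y = join y x"
    and meet_commute: "x \<in> S \<Longrightarrow> y \<in> S \<Longrightarrow> meet x y = meet y x"
    and join_meet_absorb: "x \<in> S \<Longrightarrow> y \<in> S \<Longrightarrow> join x (meet x y) = x"
    and meet_join_absorb: "x \<in> S \<Longrightarrow> y \<in> S \<Longrightarrow> meet x (join x y) = x"
    and join_bot: "x \<in> S \<Longrightarrow> join x bt = x"
    and meet_top: "x \<in> S \<Longrightarrow> meet x tp = x"
    and meet_eq_bot_iff_le_pc: "x \<in> S \<Longrightarrow> y \<in> S \<Longrightarrow> meet x y = bt \<longleftrightarrow> join x (pc y) = pc y"
    and stone: "x \<in> S \<Longrightarrow> join (pc x) (pc (pc x)) = tp"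
    and mult_assoc: "x \<in> S \<Longrightarrow> y \<in> S \<Longrightarrow> z \<in> S \<Longrightarrow> mult (mult x y) z = mult x (mult y z)"
    and mult_join_distrib_left:
      "x \<in> S \<Longrightarrow> y \<in> S \<Longrightarrow> z \<in> S \<Longrightarrow> mult x (join y z) = join (mult x y) (mult x z)"
    and mult_join_distrib_right:
      "x \<in> S \<Longrightarrow> y \<in> S \<Longrightarrow> z \<in> S \<Longrightarrow> mult (join x y) z = join (mult x z) (mult y z)"
    and mult_one_left: "x \<in> S \<Longrightarrow> mult one x = x"
    and mult_one_right: "x \<in> S \<Longrightarrow> mult x one = x"
    and mult_bot_left: "x \<in> S \<Longrightarrow> mult bt x = bt"
    and mult_bot_right: "x \<in> S \<Longrightarrow> mult x bt = bt"
    and cv_cv: "x \<in> S \<Longrightarrow> cv (cv x) = x"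
    and cv_mult: "x \<in> S \<Longrightarrow> y \<in> S \<Longrightarrow> cv (mult x y) = mult (cv y) (cv x)"
    and cv_join: "x \<in> S \<Longrightarrow> y \<in> S \<Longrightarrow> cv (join x y) = join (cv x) (cv y)"
    and pc_pc_one: "pc (pc one) = one"
    and pc_pc_mult: "x \<in> S \<Longrightarrow> y \<in> S \<Longrightarrow> pc (pc (mult x y)) = mult (pc (pc x)) (pc (pc y))"
    and dedekind: "x \<in> S \<Longrightarrow> y \<in> S \<Longrightarrow> z \<in> S \<Longrightarrow>
      join (meet (mult x y) z) (mult x (meet y (mult (cv x) z))) = mult x (meet y (mult (cv x) z))"

lemma stone_ra_iff_stone_relation_algebra:
  "stone_ra S join meet mult pc cv bt tp one \<longleftrightarrow> stone_relation_algebra S join meet mult pc cv bt tp one"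
  unfolding stone_ra_def stone_relation_algebra_def by (simp add: Ball_def imp_conjR all_conj_distrib)

context stone_relation_algebra
begin

abbreviation less_eq_sra (infix "\<sqsubseteq>" 50) where "x \<sqsubseteq> y \<equiv> join x y = y"

abbreviation vector where "vector \<equiv> is_vector mult tp"
abbreviation covector where "covector \<equiv> is_covector mult tp"
abbreviation ideal where "ideal \<equiv> is_ideal mult tp"

lemma join_idem: "x \<in> S \<Longrightarrow> join x x = x"
  by (metis join_meet_absorb meet_join_absorb join_closed)

lemma meet_idem: "x \<in> S \<Longrightarrow> meet x x = x"
  by (metis join_meet_absorb meet_join_absorb meet_closed)

lemma le_iff_meet: "x \<in> S \<Longrightarrow> y \<in> S \<Longrightarrow> x \<sqsubseteq> y \<longleftrightarrow> meet x y = x"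
  by (metis join_meet_absorb meet_join_absorb join_commute meet_commute)

lemma le_trans: "x \<sqsubseteq> y \<Longrightarrow> y \<sqsubseteq> z \<Longrightarrow> x \<in> S \<Longrightarrow> y \<in> S \<Longrightarrow> z \<in> S \<Longrightarrow> x \<sqsubseteq> z"
  by (metis join_assoc)

lemma le_antisym: "x \<sqsubseteq> y \<Longrightarrow> y \<sqsubseteq> x \<Longrightarrow> x \<in> S \<Longrightarrow> y \<in> S \<Longrightarrow> x = y"
  by (metis join_commute)

lemma meet_lower1: "x \<in> S \<Longrightarrow> y \<in> S \<Longrightarrow> meet x y \<sqsubseteq> x"
  by (metis join_meet_absorb join_commute meet_closed)

lemma meet_lower2: "x \<in> S \<Longrightarrow> y \<in> S \<Longrightarrow> meet x y \<sqsubseteq> y"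
  by (metis meet_lower1 meet_commute)

lemma meet_greatest: "x \<in> S \<Longrightarrow> y \<in> S \<Longrightarrow> z \<in> S \<Longrightarrow> z \<sqsubseteq> x \<Longrightarrow> z \<sqsubseteq> y \<Longrightarrow> z \<sqsubseteq> meet x y"
  by (metis le_iff_meet meet_assoc meet_closed)

lemma bot_least: "x \<in> S \<Longrightarrow> bt \<sqsubseteq> x"
  by (metis join_bot join_commute bot_closed)

lemma top_greatest: "x \<in> S \<Longrightarrow> x \<sqsubseteq> tp"
  by (metis le_iff_meet meet_top top_closed)

lemma le_bot_iff: "x \<in> S \<Longrightarrow> x \<sqsubseteq> bt \<longleftrightarrow> x = bt"
  by (metis join_bot)

lemma meet_bot: "x \<in> S \<Longrightarrow> meet x bt = bt"
  by (metis bot_least le_iff_meet meet_commute bot_closed)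

lemma meet_bot_left: "x \<in> S \<Longrightarrow> meet bt x = bt"
  by (metis meet_bot meet_commute bot_closed)

lemma meet_top_left: "x \<in> S \<Longrightarrow> meet tp x = x"
  by (metis meet_top meet_commute top_closed)

lemma meet_join_distrib_right:
  "x \<in> S \<Longrightarrow> y \<in> S \<Longrightarrow> z \<in> S \<Longrightarrow> meet (join x y) z = join (meet x z) (meet y z)"
  by (metis meet_join_distrib meet_commute join_closed)

lemma meet_mono: "x \<in> S \<Longrightarrow> y \<in> S \<Longrightarrow> z \<in> S \<Longrightarrow> x \<sqsubseteq> y \<Longrightarrow> meet x z \<sqsubseteq> meet y z"
  by (meson meet_closed le_trans meet_greatest meet_lower1 meet_lower2)

lemma mult_mono_right: "x \<in> S \<Longrightarrow> y \<in> S \<Longrightarrow> z \<in> S \<Longrightarrow> x \<sqsubseteq> y \<Longrightarrow> mult z x \<sqsubseteq> mult z y"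
  by (metis mult_join_distrib_left)

lemma mult_mono_left: "x \<in> S \<Longrightarrow> y \<in> S \<Longrightarrow> z \<in> S \<Longrightarrow> x \<sqsubseteq> y \<Longrightarrow> mult x z \<sqsubseteq> mult y z"
  by (metis mult_join_distrib_right)

lemma mult_mono:
  "x \<in> S \<Longrightarrow> y \<in> S \<Longrightarrow> u \<in> S \<Longrightarrow> v \<in> S \<Longrightarrow> x \<sqsubseteq> y \<Longrightarrow> u \<sqsubseteq> v \<Longrightarrow> mult x u \<sqsubseteq> mult y v"
  by (meson mult_closed le_trans mult_mono_left mult_mono_right)

lemma le_mult_top: "x \<in> S \<Longrightarrow> x \<sqsubseteq> mult x tp"
  by (metis top_closed one_closed top_greatest mult_one_right mult_mono_right)

lemma mult_top_top: "mult tp tp = tp"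
  by (metis top_closed one_closed mult_closed le_antisym top_greatest mult_one_left mult_mono_left)

lemma pc_meet_self: "x \<in> S \<Longrightarrow> meet x (pc x) = bt"
  by (metis pc_closed join_idem meet_commute meet_eq_bot_iff_le_pc)

lemma pc_top: "pc tp = bt"
  by (metis top_closed pc_closed pc_meet_self meet_commute meet_top)

lemma pc_bot: "pc bt = tp"
  by (metis bot_closed top_closed pc_closed le_antisym top_greatest meet_bot meet_eq_bot_iff_le_pc)

subsection \<open>Converse\<close>

lemma cv_mono: "x \<in> S \<Longrightarrow> y \<in> S \<Longrightarrow> x \<sqsubseteq> y \<Longrightarrow> cv x \<sqsubseteq> cv y"
  by (metis cv_join)

lemma cv_le_iff: "x \<in> S \<Longrightarrow> y \<in> S \<Longrightarrow> cv x \<sqsubseteq> cv y \<longleftrightarrow> x \<sqsubseteq> y"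
  by (metis cv_mono cv_cv cv_closed)

lemma cv_le_iff_le_cv: "x \<in> S \<Longrightarrow> y \<in> S \<Longrightarrow> cv x \<sqsubseteq> y \<longleftrightarrow> x \<sqsubseteq> cv y"
  by (metis cv_le_iff cv_cv cv_closed)

lemma cv_meet: "x \<in> S \<Longrightarrow> y \<in> S \<Longrightarrow> cv (meet x y) = meet (cv x) (cv y)"
proof -
  have le: "cv (meet a b) \<sqsubseteq> meet (cv a) (cv b)" if "a \<in> S" "b \<in> S" for a b
    using that by (meson cv_closed meet_closed cv_mono meet_greatest meet_lower1 meet_lower2)
  assume "x \<in> S" "y \<in> S"
  then have "cv (meet (cv x) (cv y)) \<sqsubseteq> meet x y"
    using le[of "cv x" "cv y"] by (simp add: cv_cv)
  then have "meet (cv x) (cv y) \<sqsubseteq> cv (meet x y)"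
    using \<open>x \<in> S\<close> \<open>y \<in> S\<close> by (metis meet_closed cv_closed cv_le_iff_le_cv)
  then show ?thesis
    using le[of x y] \<open>x \<in> S\<close> \<open>y \<in> S\<close> by (metis meet_closed cv_closed le_antisym)
qed

lemma cv_bot: "cv bt = bt"
  by (metis bot_least bot_closed cv_closed cv_le_iff_le_cv le_antisym)

lemma cv_top: "cv tp = tp"
  by (metis top_greatest top_closed cv_closed cv_le_iff_le_cv le_antisym)

lemma cv_pc: "x \<in> S \<Longrightarrow> cv (pc x) = pc (cv x)"
proof -
  have le: "cv (pc a) \<sqsubseteq> pc (cv a)" if "a \<in> S" for a
    using that by (metis pc_closed cv_closed cv_bot cv_meet meet_eq_bot_iff_le_pc pc_meet_self meet_commute)
  assume "x \<in> S"
  then have "pc (cv x) \<sqsubseteq> cv (pc x)"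
    using le[of "cv x"] by (metis pc_closed cv_closed cv_cv cv_le_iff_le_cv)
  then show ?thesis
    using le[of x] \<open>x \<in> S\<close> by (metis pc_closed cv_closed le_antisym)
qed

lemma dedekind_right: "x \<in> S \<Longrightarrow> y \<in> S \<Longrightarrow> z \<in> S \<Longrightarrow>
    meet (mult x y) z \<sqsubseteq> mult (meet x (mult z (cv y))) y"
  using dedekind[of "cv y" "cv x" "cv z"] cv_le_iff[of "meet (mult x y) z" "mult (meet x (mult z (cv y))) y"]
  by (simp add: cv_meet cv_mult cv_cv)

subsection \<open>Vectors, covectors and ideals\<close>

lemma ideal_iff: "ideal x \<longleftrightarrow> mult x tp = x \<and> mult tp x = x"
  unfolding is_ideal_def is_vector_def is_covector_def ..

lemma vector_cv: "x \<in> S \<Longrightarrow> vector x \<Longrightarrow> covector (cv x)"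
  unfolding is_vector_def is_covector_def by (metis top_closed cv_mult cv_top)

lemma covector_cv: "x \<in> S \<Longrightarrow> covector x \<Longrightarrow> vector (cv x)"
  unfolding is_vector_def is_covector_def by (metis top_closed cv_mult cv_top)

lemma vector_pc:
  assumes "x \<in> S" and "vector x"
  shows "vector (pc x)"
proof -
  have "covector (cv x)"
    using assms vector_cv by blast
  then have "mult (meet (cv (pc x)) (mult tp (cv x))) x = bt"
    using assms(1) unfolding is_covector_def
    by (simp add: cv_meet[symmetric] meet_commute[of "pc x" x] pc_meet_self cv_bot mult_bot_left)
  then have "mult (cv (pc x)) x = bt"
    using dedekind_right[of "cv (pc x)" x tp] assms(1) by (simp add: meet_top le_bot_iff)
  then have "meet (mult (pc x) tp) x = bt"
    using dedekind[of "pc x" tp x] assms(1)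
    by (simp add: meet_bot meet_commute[of tp] mult_bot_right le_bot_iff)
  then have "mult (pc x) tp \<sqsubseteq> pc x"
    using assms(1) by (simp add: meet_eq_bot_iff_le_pc)
  then show ?thesis
    unfolding is_vector_def using assms(1) by (metis top_closed mult_closed pc_closed le_antisym le_mult_top)
qed

lemma covector_pc:
  assumes "x \<in> S" and "covector x"
  shows "covector (pc x)"
proof -
  have "covector (cv (pc (cv x)))"
    using assms by (simp add: covector_cv vector_pc vector_cv)
  moreover have "cv (pc (cv x)) = pc x"
    using assms(1) by (simp add: cv_pc cv_cv)
  ultimately show ?thesis
    by simp
qed

lemma vector_mult_covector:
  assumes "x \<in> S" "y \<in> S" and "vector x" "covector y"
  shows "mult x y = meet x y"
proof (rule le_antisym)
  have "mult x y \<sqsubseteq> mult x tp" "mult x y \<sqsubseteq> mult tp y"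
    using assms by (simp_all add: mult_mono_left mult_mono_right top_greatest)
  then show "mult x y \<sqsubseteq> meet x y"
    using assms unfolding is_vector_def is_covector_def by (simp add: meet_greatest)
  have "meet x y \<sqsubseteq> mult x (meet one (mult (cv x) y))"
    using dedekind[of x one y] assms by (simp add: mult_one_right)
  moreover have "mult (cv x) y \<sqsubseteq> mult tp y"
    using assms by (simp add: mult_mono_left top_greatest)
  then have "mult (cv x) y \<sqsubseteq> y"
    using assms(4) unfolding is_covector_def by simp
  with meet_lower2 have "meet one (mult (cv x) y) \<sqsubseteq> y"
    by (rule le_trans) (use assms in simp_all)
  then have "mult x (meet one (mult (cv x) y)) \<sqsubseteq> mult x y"
    using assms by (simp add: mult_mono_right)
  ultimately show "meet x y \<sqsubseteq> mult x y"
    by (rule le_trans) (use assms in simp_all)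
qed (use assms in simp_all)

lemma ideal_le_cv:
  assumes "x \<in> S" and "ideal x"
  shows "x \<sqsubseteq> cv x"
proof -
  have "x \<sqsubseteq> mult x (meet one (mult (cv x) x))"
    using dedekind[of x one x] assms by (simp add: mult_one_right meet_idem)
  moreover have "mult (cv x) x \<sqsubseteq> mult (cv x) tp"
    using assms by (simp add: mult_mono_right top_greatest)
  with meet_lower2 have "meet one (mult (cv x) x) \<sqsubseteq> mult (cv x) tp"
    by (rule le_trans) (use assms in simp_all)
  then have "mult x (meet one (mult (cv x) x)) \<sqsubseteq> mult tp (mult (cv x) tp)"
    using assms by (simp add: mult_mono top_greatest)
  moreover have "mult tp (mult (cv x) tp) = cv x"
    using assms vector_cv covector_cv unfolding is_ideal_def is_vector_def is_covector_def
    by (simp add: mult_assoc[symmetric])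
  ultimately show ?thesis
    by (metis le_trans one_closed meet_closed mult_closed cv_closed assms(1))
qed

lemma ideal_cv_eq:
  assumes "x \<in> S" and "ideal x"
  shows "cv x = x"
proof -
  have "ideal (cv x)"
    using assms vector_cv covector_cv unfolding is_ideal_def by blast
  then have "cv x \<sqsubseteq> x"
    using ideal_le_cv[of "cv x"] assms(1) by (simp add: cv_cv)
  from this ideal_le_cv[OF assms] show ?thesis
    by (rule le_antisym) (use assms in simp_all)
qed

lemma meet_ideal_mult_distrib:
  assumes "x \<in> S" "y \<in> S" "z \<in> S" and "ideal x"
  shows "meet (mult y z) x = mult (meet y x) (meet z x)"
proof (rule le_antisym)
  have vx: "mult x tp = x" and cx: "mult tp x = x"
    using assms(4) by (simp_all add: ideal_iff)
  have "mult x (cv z) \<sqsubseteq> x"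
    using assms mult_mono_right[of "cv z" tp x] vx by (simp add: top_greatest)
  then have "mult (meet y (mult x (cv z))) z \<sqsubseteq> mult (meet y x) z"
    using assms by (simp add: meet_mono meet_commute[of y] mult_mono_left)
  with dedekind_right[of y z x] have "meet (mult y z) x \<sqsubseteq> mult (meet y x) z"
    by (rule le_trans) (use assms in simp_all)
  then have "meet (mult y z) x \<sqsubseteq> meet (mult (meet y x) z) x"
    using assms by (simp add: meet_greatest meet_lower2)
  moreover have "mult (cv (meet y x)) x \<sqsubseteq> x"
    using assms mult_mono_left[of "cv (meet y x)" tp x] cx by (simp add: top_greatest)
  then have "mult (meet y x) (meet z (mult (cv (meet y x)) x)) \<sqsubseteq> mult (meet y x) (meet z x)"
    using assms by (simp add: meet_mono meet_commute[of z] mult_mono_right)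
  with dedekind[of "meet y x" z x] have "meet (mult (meet y x) z) x \<sqsubseteq> mult (meet y x) (meet z x)"
    by (rule le_trans) (use assms in simp_all)
  ultimately show "meet (mult y z) x \<sqsubseteq> mult (meet y x) (meet z x)"
    by (rule le_trans) (use assms in simp_all)
  have "mult (meet y x) (meet z x) \<sqsubseteq> mult y z" "mult (meet y x) (meet z x) \<sqsubseteq> mult x tp"
    using assms by (simp_all add: meet_lower1 meet_lower2 top_greatest mult_mono)
  then show "mult (meet y x) (meet z x) \<sqsubseteq> meet (mult y z) x"
    using assms vx by (simp add: meet_greatest)
qed (use assms in simp_all)

lemma ideal_iff_top_mult_top: "x \<in> S \<Longrightarrow> ideal x \<longleftrightarrow> mult (mult tp x) tp = x"
  unfolding ideal_iff by (metis top_closed mult_closed mult_assoc mult_top_top)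

lemma ideal_cv_mult_vector:
  "x \<in> S \<Longrightarrow> y \<in> S \<Longrightarrow> z \<in> S \<Longrightarrow> vector x \<Longrightarrow> vector z \<Longrightarrow> ideal (mult (mult (cv x) y) z)"
  unfolding ideal_iff using vector_cv unfolding is_vector_def is_covector_def
  by (metis top_closed mult_closed cv_closed mult_assoc)

subsection \<open>The algebra of ideals\<close>

abbreviation I where "I \<equiv> ideals S mult tp"

lemma mem_ideals_iff: "x \<in> I \<longleftrightarrow> x \<in> S \<and> mult x tp = x \<and> mult tp x = x"
  unfolding ideals_def ideal_iff by blast

lemma ideals_subset: "I \<subseteq> S"
  unfolding ideals_def by blast

lemma bot_in_ideals: "bt \<in> I"
  by (simp add: mem_ideals_iff mult_bot_left mult_bot_right)

lemma top_in_ideals: "tp \<in> I"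
  by (simp add: mem_ideals_iff mult_top_top)

lemma mult_in_ideals: "x \<in> I \<Longrightarrow> y \<in> I \<Longrightarrow> mult x y \<in> I"
  unfolding mem_ideals_iff by (metis top_closed mult_closed mult_assoc)

lemma join_in_ideals: "x \<in> I \<Longrightarrow> y \<in> I \<Longrightarrow> join x y \<in> I"
  unfolding mem_ideals_iff by (metis top_closed join_closed mult_join_distrib_left mult_join_distrib_right)

lemma mult_ideals_eq_meet: "x \<in> I \<Longrightarrow> y \<in> I \<Longrightarrow> mult x y = meet x y"
  unfolding ideals_def is_ideal_def by (blast intro: vector_mult_covector)

lemma meet_in_ideals: "x \<in> I \<Longrightarrow> y \<in> I \<Longrightarrow> meet x y \<in> I"
  by (metis mult_in_ideals mult_ideals_eq_meet)

lemma cv_in_ideals: "x \<in> I \<Longrightarrow> cv x \<in> I"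
  unfolding ideals_def by (simp add: ideal_cv_eq)

lemma pc_in_ideals: "x \<in> I \<Longrightarrow> pc x \<in> I"
  unfolding ideals_def is_ideal_def by (simp add: vector_pc covector_pc)

lemma stone_relation_algebra_ideals: "stone_relation_algebra I join meet meet pc cv bt tp tp"
proof -
  have S: "x \<in> S" if "x \<in> I" for x
    using that ideals_subset by blast
  have cv_id: "cv x = x" if "x \<in> I" for x
    using that unfolding ideals_def by (simp add: ideal_cv_eq)
  show ?thesis
  proof unfold_locales
    fix x y
    assume "x \<in> I" "y \<in> I"
    then show "join x y = join y x" "meet x y = meet y x" "cv (meet x y) = meet (cv y) (cv x)"
      using S cv_id by (simp_all add: join_commute meet_commute meet_in_ideals)
    show "pc (pc (meet x y)) = meet (pc (pc x)) (pc (pc y))"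
      using \<open>x \<in> I\<close> \<open>y \<in> I\<close> pc_pc_mult[of x y] mult_ideals_eq_meet pc_in_ideals S by metis
  next
    fix x y z
    assume "x \<in> I" "y \<in> I" "z \<in> I"
    then show "meet (meet x y) z \<sqsubseteq> meet x (meet y (meet (cv x) z))"
      using S cv_id by (metis meet_assoc meet_commute meet_idem meet_closed join_idem)
  qed (use S cv_id in \<open>simp_all add: bot_in_ideals top_in_ideals join_in_ideals meet_in_ideals
    pc_in_ideals cv_in_ideals join_assoc meet_assoc meet_join_distrib meet_join_distrib_right meet_idem join_meet_absorb
    meet_join_absorb join_bot meet_top meet_top_left meet_bot meet_bot_left bot_least
    meet_eq_bot_iff_le_pc stone pc_bot pc_top cv_meet cv_join\<close>)
qed

end

theorem mainTheorem10:
  assumes "stone_ra S join meet mult pc cv bt tp one"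
    and "x \<in> S" and "y \<in> S" and "z \<in> S"
  shows "(is_ideal mult tp x \<longleftrightarrow> mult (mult tp x) tp = x)
    \<and> (is_vector mult tp x \<and> is_vector mult tp z \<longrightarrow> is_ideal mult tp (mult (mult (cv x) y) z))
    \<and> (\<forall>a\<in>ideals S mult tp. \<forall>b\<in>ideals S mult tp.
         mult a b \<in> ideals S mult tp \<and> join a b \<in> ideals S mult tp \<and> meet a b \<in> ideals S mult tp)
    \<and> (\<forall>a\<in>ideals S mult tp. cv a \<in> ideals S mult tp \<and> pc a \<in> ideals S mult tp)
    \<and> is_ideal mult tp bt \<and> is_ideal mult tp tp
    \<and> (is_ideal mult tp x \<and> is_ideal mult tp y \<longrightarrow> mult x y = meet x y)
    \<and> stone_ra (ideals S mult tp) join meet meet pc cv bt tp tp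
    \<and> (is_ideal mult tp x \<longrightarrow> x = cv x)
    \<and> (is_ideal mult tp x \<longrightarrow> meet (mult y z) x = mult (meet y x) (meet z x))"
proof -
  interpret stone_relation_algebra S join meet mult pc cv bt tp one
    using assms(1) by (simp add: stone_ra_iff_stone_relation_algebra)
  have mem_ideals: "a \<in> ideals S mult tp \<longleftrightarrow> is_ideal mult tp a" if "a \<in> S" for a
    using that unfolding ideals_def by blast
  show ?thesis
  proof (intro conjI impI ballI)
    show "is_ideal mult tp bt" "is_ideal mult tp tp"
      using mem_ideals bot_in_ideals top_in_ideals by simp_all
    show "is_ideal mult tp (mult (mult (cv x) y) z)" if "is_vector mult tp x \<and> is_vector mult tp z"
      using that assms(2-4) ideal_cv_mult_vector by blast
    show "mult x y = meet x y" if "is_ideal mult tp x \<and> is_ideal mult tp y"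
      using that assms(2,3) mem_ideals mult_ideals_eq_meet by blast
    show "x = cv x" if "is_ideal mult tp x"
      using that assms(2) ideal_cv_eq by simp
    show "stone_ra (ideals S mult tp) join meet meet pc cv bt tp tp"
      using stone_relation_algebra_ideals by (simp add: stone_ra_iff_stone_relation_algebra)
  qed (use assms(2-4) in \<open>simp_all add: ideal_iff_top_mult_top mult_in_ideals
    join_in_ideals meet_in_ideals cv_in_ideals pc_in_ideals meet_ideal_mult_distrib\<close>)
qed

end
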